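(* Let $\alpha\in\mathcal A\cap\mathbb R$ be simple, and for $k\in\mathbb C$ let $u(k)$, $u^*(k)$ be unit vectors spanning $\ker_{L^2_0}(D(\alpha)+k)$ and $\ker_{L^2_0}(D(\alpha)^*+\bar k)$ respectively. Then $$\langle u(k)|C|u(k)\rangle=\langle u^*(k)|C|u^*(k)\rangle\quad\text{for all }k\in\mathbb C,$$ i.e. $e_+(k)=e_-(k)$ where $e_+(k)=-\langle u(k)|C|u(k)\rangle$, $e_-(k)=-\langle u^*(k)|C|u^*(k)\rangle$.
   Context: Let $\omega=e^{2\pi i/3}$, $\Lambda=\mathbb Z\oplus\omega\mathbb Z$, $K=\frac43\pi$, $\langle z,w\rangle=\operatorname{Re}(z\bar w)$. Let $U,V\in C^\infty(\mathbb C)$ satisfy, for all $z$ and $\gamma\in\Lambda$: $U(z+\gamma)=e^{i\langle\gamma,K\rangle}U(z)$, $U(\omega z)=\omega U(z)$, $\overline{U(\bar z)}=-U(-z)$, and $V(z)=V(\bar z)=\overline{V(-z)}$, $V(\omega z)=V(z)$, $V(z+\gamma)=e^{i\langle\gamma,K\rangle}V(z)$. With $D_{\bar z}=-i\partial_{\bar z}$, $D(\alpha)=\begin{pmatrix}2D_{\bar z}&\alpha U(z)\\ \alpha U(-z)&2D_{\bar z}\end{pmatrix}$, $C=\begin{pmatrix}0&V(z)\\ V(-z)&0\end{pmatrix}$. $L_\gamma u(z)=\operatorname{diag}(e^{i\langle\gamma,K\rangle},e^{-i\langle\gamma,K\rangle})u(z+\gamma)$ and $L^2_0=L^2_0(\mathbb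 C;\mathbb C^2)=\{u\in L^2_{loc}(\mathbb C;\mathbb C^2):L_\gamma u=u\ \forall\gamma\in\Lambda\}$, with $\langle v|A|w\rangle=\int_{\mathbb C/\Lambda}(Aw)\cdot\bar v\,dm$. $\alpha$ is magic ($\alpha\in\mathcal A$) if $\ker_{L^2_0}(D(\alpha)+k)\ne\{0\}$ for all $k\in\mathbb C$, and simple if this kernel is one-dimensional for all $k$ (then also $\ker_{L^2_0}(D(\alpha)^*+\bar k)$ is one-dimensional). *)

theory Defs
  imports "HOL-Analysis.Analysis"
begin

definition omega :: complex where
  "omega = exp (2 * pi * \<i> / 3)"

definition lattice :: "complex set" where
  "lattice = {of_int m + of_int n * omega | m n. True}"

definition Kpt :: complex where
  "Kpt = of_real (4 / 3 * pi)"

definition rinner :: "complex \<Rightarrow> complex \<Rightarrow> real" where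
  "rinner z w = Re (z * cnj w)"

definition dx :: "(complex \<Rightarrow> complex) \<Rightarrow> complex \<Rightarrow> complex" where
  "dx f z = frechet_derivative f (at z) 1"

definition dy :: "(complex \<Rightarrow> complex) \<Rightarrow> complex \<Rightarrow> complex" where
  "dy f z = frechet_derivative f (at z) \<i>"

definition dzbar :: "(complex \<Rightarrow> complex) \<Rightarrow> complex \<Rightarrow> complex" where
  "dzbar f z = (dx f z + \<i> * dy f z) / 2"

definition dz :: "(complex \<Rightarrow> complex) \<Rightarrow> complex \<Rightarrow> complex" where
  "dz f z = (dx f z - \<i> * dy f z) / 2"

coinductive smooth :: "(complex \<Rightarrow> complex) \<Rightarrow> bool" where
  "\<lbrakk>\<forall>z. f differentiable (at z); smooth (dx f); smooth (dy f)\<rbrakk> \<Longrightarrow> smooth f"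

definition cell :: "complex set" where
  "cell = {of_real s + of_real t * omega | s t. 0 \<le> s \<and> s \<le> 1 \<and> 0 \<le> t \<and> t \<le> 1}"

definition L0_invariant :: "(complex \<Rightarrow> complex \<times> complex) \<Rightarrow> bool" where
  "L0_invariant u \<longleftrightarrow> (\<forall>\<gamma>\<in>lattice. \<forall>z.
      exp (\<i> * of_real (rinner \<gamma> Kpt)) * fst (u (z + \<gamma>)) = fst (u z) \<and>
      exp (- \<i> * of_real (rinner \<gamma> Kpt)) * snd (u (z + \<gamma>)) = snd (u z))"

text \<open>(Smooth) elements of L^2_0: smooth functions with L_gamma u = u.\<close>
definition L2_0 :: "(complex \<Rightarrow> complex \<times> complex) set" where
  "L2_0 = {u. smooth (\<lambda>z. fst (u z)) \<and> smooth (\<lambda>z. snd (u z)) \<and> L0_invariant u}"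

definition Dk :: "(complex \<Rightarrow> complex) \<Rightarrow> complex \<Rightarrow> complex \<Rightarrow>
    (complex \<Rightarrow> complex \<times> complex) \<Rightarrow> complex \<Rightarrow> complex \<times> complex" where
  "Dk U \<alpha> k u z =
     (2 * (- \<i>) * dzbar (\<lambda>w. fst (u w)) z + \<alpha> * U z * snd (u z) + k * fst (u z),
      \<alpha> * U (- z) * fst (u z) + 2 * (- \<i>) * dzbar (\<lambda>w. snd (u w)) z + k * snd (u z))"

text \<open>D(alpha)^* + conj k: the formal L^2 adjoint of D(alpha) (D_zbar^* = D_z = -i d_z,
  conjugate transpose of the potential), plus conj k.\<close>
definition Dadjk :: "(complex \<Rightarrow> complex) \<Rightarrow> complex \<Rightarrow> complex \<Rightarrow>
    (complex \<Rightarrow> complex \<times> complex) \<Rightarrow> complex \<Rightarrow> complex \<times> complex" where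
  "Dadjk U \<alpha> k u z =
     (2 * (- \<i>) * dz (\<lambda>w. fst (u w)) z + cnj \<alpha> * cnj (U (- z)) * snd (u z) + cnj k * fst (u z),
      cnj \<alpha> * cnj (U z) * fst (u z) + 2 * (- \<i>) * dz (\<lambda>w. snd (u w)) z + cnj k * snd (u z))"

definition kerD :: "(complex \<Rightarrow> complex) \<Rightarrow> complex \<Rightarrow> complex \<Rightarrow> (complex \<Rightarrow> complex \<times> complex) set" where
  "kerD U \<alpha> k = {u \<in> L2_0. \<forall>z. Dk U \<alpha> k u z = (0, 0)}"

definition kerDadj :: "(complex \<Rightarrow> complex) \<Rightarrow> complex \<Rightarrow> complex \<Rightarrow> (complex \<Rightarrow> complex \<times> complex) set" where
  "kerDadj U \<alpha> k = {u \<in> L2_0. \<forall>z. Dadjk U \<alpha> k u z = (0, 0)}"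

definition bracket :: "(complex \<Rightarrow> complex \<times> complex) \<Rightarrow> (complex \<Rightarrow> complex \<times> complex) \<Rightarrow> complex" where
  "bracket v w = integral cell (\<lambda>z. fst (w z) * cnj (fst (v z)) + snd (w z) * cnj (snd (v z)))"

definition Cop :: "(complex \<Rightarrow> complex) \<Rightarrow> (complex \<Rightarrow> complex \<times> complex) \<Rightarrow> complex \<Rightarrow> complex \<times> complex" where
  "Cop V u z = (V z * snd (u z), V (- z) * fst (u z))"

definition unit_vec :: "(complex \<Rightarrow> complex \<times> complex) \<Rightarrow> bool" where
  "unit_vec u \<longleftrightarrow> bracket u u = 1"

definition magic :: "(complex \<Rightarrow> complex) \<Rightarrow> complex \<Rightarrow> bool" where
  "magic U \<alpha> \<longleftrightarrow> (\<forall>k. \<exists>u\<in>kerD U \<alpha> k. u \<noteq> (\<lambda>z. (0, 0)))"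

definition one_dim :: "(complex \<Rightarrow> complex \<times> complex) set \<Rightarrow> bool" where
  "one_dim S \<longleftrightarrow> (\<exists>u\<in>S. u \<noteq> (\<lambda>z. (0, 0)) \<and> (\<forall>v\<in>S. \<exists>c::complex. v = (\<lambda>z. (c * fst (u z), c * snd (u z)))))"

definition simple_magic :: "(complex \<Rightarrow> complex) \<Rightarrow> complex \<Rightarrow> bool" where
  "simple_magic U \<alpha> \<longleftrightarrow> (\<forall>k. one_dim (kerD U \<alpha> k))"

end

theory Submission
  imports Defs
begin

(* For real alpha the antiunitary map (S u)(z) = conj (u (-z)) satisfies
   (D(alpha) + k) (S u) = S ((D(alpha)^* + conj k) u), so S maps ker (D(alpha)^* + conj k) into
   ker (D(alpha) + k). If alpha is simple the latter kernel is spanned by a single w, hence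
   u = a w and u^* = b (S w), and for a unit vector of the form a w one has
   <a w|C|a w> = <w|C|w> / <w|w>. Finally S preserves both <w|w> and <w|C|w>: each is the
   integral over the fundamental cell of a density that is invariant under translation by the
   lattice vector 1 + omega, and the cell is symmetric about its centre (1 + omega) / 2. *)

lemma has_integral_reflect_point_cbox:
  fixes f :: "'a::euclidean_space \<Rightarrow> 'b::real_normed_vector"
  assumes "(f has_integral i) (cbox a b)"
  shows "((\<lambda>x. f (c - x)) has_integral i) (cbox (c - b) (c - a))"
proof -
  have "((\<lambda>x. f ((-1) *\<^sub>R x + c)) has_integral i) ((\<lambda>x. (-1) *\<^sub>R x + c) ` cbox a b)"
    using has_integral_affinity[OF assms, of "-1" c] by simp
  moreover have "(\<lambda>x. c - x) ` cbox a b = cbox (c - b) (c - a)"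
  proof
    show "(\<lambda>x. c - x) ` cbox a b \<subseteq> cbox (c - b) (c - a)"
      by (auto simp: mem_box inner_diff_left)
    show "cbox (c - b) (c - a) \<subseteq> (\<lambda>x. c - x) ` cbox a b"
    proof
      fix y assume "y \<in> cbox (c - b) (c - a)"
      then have "c - y \<in> cbox a b" by (auto simp: mem_box inner_diff_left)
      then show "y \<in> (\<lambda>x. c - x) ` cbox a b" by (rule rev_image_eqI) simp
    qed
  qed
  ultimately show ?thesis by simp
qed

lemma has_integral_reflect_point_UNIV:
  fixes f :: "'a::euclidean_space \<Rightarrow> 'b::banach"
  assumes "(f has_integral i) UNIV"
  shows "((\<lambda>x. f (c - x)) has_integral i) UNIV"
proof (simp only: has_integral_alt' [where s = UNIV] UNIV_I if_True, intro conjI allI impI)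
  have int: "f integrable_on cbox a b" for a b
    using assms by (simp add: has_integral_alt')
  have reflected: "((\<lambda>x. f (c - x)) has_integral integral (cbox a b) f) (cbox (c - b) (c - a))" for a b
    using has_integral_reflect_point_cbox[OF integrable_integral[OF int]] .
  show "(\<lambda>x. f (c - x)) integrable_on cbox a b" for a b
    using reflected[of "c - b" "c - a"] by auto
  fix e :: real assume "e > 0"
  then obtain B where "B > 0"
    and B: "\<And>a b. ball 0 B \<subseteq> cbox a b \<Longrightarrow> norm (integral (cbox a b) f - i) < e"
    using assms by (fastforce simp: has_integral_alt')
  show "\<exists>B>0. \<forall>a b. ball 0 B \<subseteq> cbox a b \<longrightarrow> norm (integral (cbox a b) (\<lambda>x. f (c - x)) - i) < e"
  proof (intro exI[of _ "B + norm c"] conjI allI impI)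
    show "B + norm c > 0" using \<open>B > 0\<close> by (simp add: add_pos_nonneg)
    fix a b :: 'a assume ball: "ball 0 (B + norm c) \<subseteq> cbox a b"
    have eq: "integral (cbox a b) (\<lambda>x. f (c - x)) = integral (cbox (c - b) (c - a)) f"
      using reflected[of "c - b" "c - a"] by (simp add: integral_unique)
    have "ball 0 B \<subseteq> cbox (c - b) (c - a)"
    proof
      fix y :: 'a assume "y \<in> ball 0 B"
      then have "norm y < B" by simp
      then have "c - y \<in> ball 0 (B + norm c)"
        using norm_triangle_ineq4[of c y] by simp
      then have "c - y \<in> cbox a b" by (rule subsetD[OF ball])
      then show "y \<in> cbox (c - b) (c - a)" by (auto simp: mem_box inner_diff_left)
    qed
    then show "norm (integral (cbox a b) (\<lambda>x. f (c - x)) - i) < e"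
      unfolding eq by (rule B)
  qed
qed

lemma has_integral_reflect_point_iff:
  fixes f :: "'a::euclidean_space \<Rightarrow> 'b::banach"
  assumes S: "(\<lambda>x. c - x) ` S = S"
  shows "((\<lambda>x. f (c - x)) has_integral i) S \<longleftrightarrow> (f has_integral i) S"
proof -
  have mem: "c - x \<in> S \<longleftrightarrow> x \<in> S" for x
  proof
    assume "c - x \<in> S"
    then have "c - (c - x) \<in> (\<lambda>x. c - x) ` S" by (rule imageI)
    then show "x \<in> S" using S by simp
  next
    assume "x \<in> S"
    then have "c - x \<in> (\<lambda>x. c - x) ` S" by (rule imageI)
    then show "c - x \<in> S" using S by simp
  qed
  have "((\<lambda>x. g (c - x)) has_integral j) S" if "(g has_integral j) S" for g :: "'a \<Rightarrow> 'b" and j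
    using has_integral_reflect_point_UNIV[of "\<lambda>x. if x \<in> S then g x else 0" j c] that
    by (simp add: mem has_integral_restrict_UNIV)
  from this[of f] this[of "\<lambda>x. f (c - x)"] show ?thesis by auto
qed

lemma integral_reflect_point:
  fixes f :: "'a::euclidean_space \<Rightarrow> 'b::banach"
  assumes "(\<lambda>x. c - x) ` S = S"
  shows "integral S (\<lambda>x. f (c - x)) = integral S f"
proof -
  have "((\<lambda>x. f (c - x)) has_integral i) S \<longleftrightarrow> (f has_integral i) S" for i
    using has_integral_reflect_point_iff[OF assms] .
  then show ?thesis
    unfolding integral_def integrable_on_def by simp
qed

lemma has_derivative_scaled_conj_reflect:
  fixes f :: "complex \<Rightarrow> complex"
  assumes f': "(f has_derivative f') (at (-z))"
  shows "((\<lambda>w. c * cnj (f (-w))) has_derivative (\<lambda>h. - c * cnj (f' h))) (at z)"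
proof -
  have "((\<lambda>w. -w) has_derivative (\<lambda>h. -h)) (at z)"
    by (auto intro!: derivative_eq_intros)
  from has_derivative_compose[OF this, of f f'] f'
  have "((\<lambda>w. f (-w)) has_derivative (\<lambda>h. f' (-h))) (at z)" by simp
  then have "((\<lambda>w. c * cnj (f (-w))) has_derivative (\<lambda>h. c * cnj (f' (-h)))) (at z)"
    by (intro has_derivative_mult_right has_derivative_cnj)
  moreover have "f' (-h) = - f' h" for h
    using linear_neg[OF has_derivative_linear[OF f']] .
  ultimately show ?thesis by simp
qed

lemma dx_dy_scaled_conj_reflect:
  fixes f :: "complex \<Rightarrow> complex"
  assumes "f differentiable (at (-z))"
  shows "dx (\<lambda>w. c * cnj (f (-w))) z = - c * cnj (dx f (-z))"
    and "dy (\<lambda>w. c * cnj (f (-w))) z = - c * cnj (dy f (-z))"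
proof -
  have "frechet_derivative (\<lambda>w. c * cnj (f (-w))) (at z) =
      (\<lambda>h. - c * cnj (frechet_derivative f (at (-z)) h))"
    using has_derivative_scaled_conj_reflect[OF frechet_derivative_works[THEN iffD1, OF assms]]
    by (rule frechet_derivative_at[symmetric])
  then show "dx (\<lambda>w. c * cnj (f (-w))) z = - c * cnj (dx f (-z))"
    and "dy (\<lambda>w. c * cnj (f (-w))) z = - c * cnj (dy f (-z))"
    by (simp_all add: dx_def dy_def)
qed

lemma smooth_differentiable: "smooth f \<Longrightarrow> f differentiable (at z)"
  by (auto elim: smooth.cases)

lemma smooth_scaled_conj_reflect:
  assumes "smooth f"
  shows "smooth (\<lambda>z. c * cnj (f (-z)))"
  using assms
proof (coinduction arbitrary: f c rule: smooth.coinduct)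
  case (smooth f c)
  then have "smooth (dx f)" "smooth (dy f)" by (auto elim: smooth.cases)
  moreover have "dx (\<lambda>z. c * cnj (f (-z))) = (\<lambda>z. - c * cnj (dx f (-z)))"
    and "dy (\<lambda>z. c * cnj (f (-z))) = (\<lambda>z. - c * cnj (dy f (-z)))"
    using dx_dy_scaled_conj_reflect smooth_differentiable[OF smooth] by blast+
  moreover have "(\<lambda>z. c * cnj (f (-z))) differentiable (at z)" for z
    unfolding differentiable_def
    using has_derivative_scaled_conj_reflect frechet_derivative_works smooth_differentiable[OF smooth]
    by blast
  ultimately show ?case by blast
qed

lemma dzbar_conj_reflect:
  fixes f :: "complex \<Rightarrow> complex"
  assumes "f differentiable (at (-z))"
  shows "dzbar (\<lambda>w. cnj (f (-w))) z = - cnj (dz f (-z))"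
  using dx_dy_scaled_conj_reflect[OF assms, of 1]
  by (simp add: dz_def dzbar_def field_simps)

definition conj_reflect :: "(complex \<Rightarrow> complex \<times> complex) \<Rightarrow> complex \<Rightarrow> complex \<times> complex" where
  "conj_reflect u = (\<lambda>z. (cnj (fst (u (-z))), cnj (snd (u (-z)))))"

definition cscale :: "complex \<Rightarrow> (complex \<Rightarrow> complex \<times> complex) \<Rightarrow> complex \<Rightarrow> complex \<times> complex" where
  "cscale a u = (\<lambda>z. (a * fst (u z), a * snd (u z)))"

lemma conj_reflect_conj_reflect [simp]: "conj_reflect (conj_reflect u) = u"
  by (simp add: conj_reflect_def fun_eq_iff)

lemma conj_reflect_cscale: "conj_reflect (cscale a u) = cscale (cnj a) (conj_reflect u)"
  by (simp add: conj_reflect_def cscale_def fun_eq_iff)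

lemma L0_invariant_conj_reflect:
  assumes "L0_invariant u"
  shows "L0_invariant (conj_reflect u)"
  unfolding L0_invariant_def
proof (intro ballI allI conjI)
  fix \<gamma> z assume \<gamma>: "\<gamma> \<in> lattice"
  define e where "e = exp (\<i> * of_real (rinner \<gamma> Kpt))"
  have e_inv: "exp (- \<i> * of_real (rinner \<gamma> Kpt)) = cnj e" "e * cnj e = 1"
    by (simp_all add: e_def exp_cnj exp_add[symmetric])
  from assms \<gamma> have "e * fst (u (-(z + \<gamma>) + \<gamma>)) = fst (u (-(z + \<gamma>)))"
    unfolding L0_invariant_def e_def by blast
  moreover from assms \<gamma> have "cnj e * snd (u (-(z + \<gamma>) + \<gamma>)) = snd (u (-(z + \<gamma>)))"
    unfolding L0_invariant_def e_inv(1)[symmetric] by blast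
  ultimately have "fst (u (-(z + \<gamma>))) = e * fst (u (-z))" "snd (u (-(z + \<gamma>))) = cnj e * snd (u (-z))"
    by (simp_all add: algebra_simps)
  then show "exp (\<i> * of_real (rinner \<gamma> Kpt)) * fst (conj_reflect u (z + \<gamma>)) = fst (conj_reflect u z)"
    and "exp (- \<i> * of_real (rinner \<gamma> Kpt)) * snd (conj_reflect u (z + \<gamma>)) = snd (conj_reflect u z)"
    using e_inv(2) unfolding e_def[symmetric] e_inv(1)
    by (simp_all add: conj_reflect_def mult.assoc[symmetric] mult.commute[of "cnj e"])
qed

lemma L2_0_conj_reflect:
  assumes "u \<in> L2_0"
  shows "conj_reflect u \<in> L2_0"
  using assms smooth_scaled_conj_reflect[of "\<lambda>z. fst (u z)" 1]
    smooth_scaled_conj_reflect[of "\<lambda>z. snd (u z)" 1] L0_invariant_conj_reflect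
  by (simp add: L2_0_def conj_reflect_def)

lemma Dk_conj_reflect:
  assumes "\<alpha> \<in> \<real>" and "u \<in> L2_0"
  shows "Dk U \<alpha> k (conj_reflect u) = conj_reflect (Dadjk U \<alpha> k u)"
proof
  fix z
  have "smooth (\<lambda>w. fst (u w))" "smooth (\<lambda>w. snd (u w))"
    using assms(2) by (simp_all add: L2_0_def)
  then have "dzbar (\<lambda>w. fst (conj_reflect u w)) z = - cnj (dz (\<lambda>w. fst (u w)) (-z))"
    and "dzbar (\<lambda>w. snd (conj_reflect u w)) z = - cnj (dz (\<lambda>w. snd (u w)) (-z))"
    by (simp_all add: conj_reflect_def dzbar_conj_reflect[of "\<lambda>w. fst (u w)"]
        dzbar_conj_reflect[of "\<lambda>w. snd (u w)"] smooth_differentiable)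
  moreover have "cnj \<alpha> = \<alpha>" using assms(1) Reals_cnj_iff by blast
  ultimately show "Dk U \<alpha> k (conj_reflect u) z = conj_reflect (Dadjk U \<alpha> k u) z"
    by (simp add: Dk_def Dadjk_def conj_reflect_def algebra_simps)
qed

lemma kerDadj_conj_reflect:
  assumes "\<alpha> \<in> \<real>" and "u \<in> kerDadj U \<alpha> k"
  shows "conj_reflect u \<in> kerD U \<alpha> k"
  using assms L2_0_conj_reflect Dk_conj_reflect
  by (simp add: kerD_def kerDadj_def conj_reflect_def)

abbreviation cell_diagonal :: complex where
  "cell_diagonal \<equiv> 1 + omega"

lemma cell_diagonal_in_lattice: "cell_diagonal \<in> lattice"
  unfolding lattice_def by (rule CollectI, rule exI[of _ 1], rule exI[of _ 1]) simp

lemma Re_omega: "Re omega = -1/2"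
  using cos_120 by (simp add: omega_def Re_exp)

lemma phase_cell_diagonal: "exp (\<i> * of_real (rinner cell_diagonal Kpt)) = omega"
proof -
  have "rinner cell_diagonal Kpt = 2 * pi / 3"
    using Re_omega by (simp add: rinner_def Kpt_def)
  then have "exp (\<i> * of_real (rinner cell_diagonal Kpt)) = exp (\<i> * of_real (2 * pi / 3))"
    by (simp only:)
  also have "\<dots> = omega" by (simp add: omega_def field_simps)
  finally show ?thesis .
qed

lemma omega_mult_cnj: "omega * cnj omega = 1"
  by (simp add: omega_def exp_cnj exp_add[symmetric])

lemma omega_cube: "omega ^ 3 = 1"
proof -
  have "omega ^ 3 = exp (of_nat 3 * (2 * pi * \<i> / 3))"
    unfolding omega_def by (rule exp_of_nat_mult[symmetric])
  also have "\<dots> = exp (2 * of_real pi * \<i>)" by (intro arg_cong[where f = exp]) simp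
  also have "\<dots> = 1" by (rule exp_two_pi_i)
  finally show ?thesis .
qed

lemma cell_reflect_cell_diagonal: "(\<lambda>z. cell_diagonal - z) ` cell = cell"
proof -
  have into: "cell_diagonal - z \<in> cell" if "z \<in> cell" for z
  proof -
    from that obtain s t where "z = of_real s + of_real t * omega" "0 \<le> s" "s \<le> 1" "0 \<le> t" "t \<le> 1"
      unfolding cell_def by blast
    then have "cell_diagonal - z = of_real (1 - s) + of_real (1 - t) * omega \<and>
        0 \<le> 1 - s \<and> 1 - s \<le> 1 \<and> 0 \<le> 1 - t \<and> 1 - t \<le> 1"
      by (simp add: algebra_simps)
    then show ?thesis unfolding cell_def by blast
  qed
  have "z \<in> (\<lambda>z. cell_diagonal - z) ` cell" if "z \<in> cell" for z
    using into[OF that] by (rule rev_image_eqI) simp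
  with into show ?thesis by blast
qed

lemma integral_cell_uminus:
  fixes h :: "complex \<Rightarrow> 'a::banach"
  assumes "\<And>w. h (w + cell_diagonal) = h w"
  shows "integral cell (\<lambda>z. h (-z)) = integral cell h"
proof -
  have "(\<lambda>z. h (-z)) = (\<lambda>z. h (cell_diagonal - z))"
    using assms[of "-_"] by (simp add: fun_eq_iff algebra_simps)
  then show ?thesis
    using integral_reflect_point[OF cell_reflect_cell_diagonal, of h] by simp
qed

lemma L0_invariant_shift_cell_diagonal:
  assumes "L0_invariant u"
  shows "fst (u (z + cell_diagonal)) = cnj omega * fst (u z)"
    and "snd (u (z + cell_diagonal)) = omega * snd (u z)"
proof -
  have phase_cnj: "exp (- \<i> * of_real (rinner cell_diagonal Kpt)) = cnj omega"
    using exp_cnj[of "\<i> * of_real (rinner cell_diagonal Kpt)"] phase_cell_diagonal by simp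
  from assms cell_diagonal_in_lattice
  have "exp (\<i> * of_real (rinner cell_diagonal Kpt)) * fst (u (z + cell_diagonal)) = fst (u z)"
    and "exp (- \<i> * of_real (rinner cell_diagonal Kpt)) * snd (u (z + cell_diagonal)) = snd (u z)"
    unfolding L0_invariant_def by blast+
  then have "omega * fst (u (z + cell_diagonal)) = fst (u z)"
    and "cnj omega * snd (u (z + cell_diagonal)) = snd (u z)"
    unfolding phase_cell_diagonal phase_cnj .
  then show "fst (u (z + cell_diagonal)) = cnj omega * fst (u z)"
    and "snd (u (z + cell_diagonal)) = omega * snd (u z)"
    using omega_mult_cnj by (metis mult.assoc mult.commute mult_1)+
qed

lemma quasiperiodic_shift_cell_diagonal:
  assumes "\<forall>z. \<forall>\<gamma>\<in>lattice. V (z + \<gamma>) = exp (\<i> * of_real (rinner \<gamma> Kpt)) * V z"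
  shows "V (z + cell_diagonal) = omega * V z"
    and "V (- (z + cell_diagonal)) = cnj omega * V (-z)"
proof -
  have shift: "V (x + cell_diagonal) = omega * V x" for x
  proof -
    from assms cell_diagonal_in_lattice
    have "V (x + cell_diagonal) = exp (\<i> * of_real (rinner cell_diagonal Kpt)) * V x" by blast
    then show ?thesis unfolding phase_cell_diagonal .
  qed
  then show "V (z + cell_diagonal) = omega * V z" .
  have "V (-z) = omega * V (- (z + cell_diagonal))"
    using shift[of "- (z + cell_diagonal)"] by simp
  then show "V (- (z + cell_diagonal)) = cnj omega * V (-z)"
    using omega_mult_cnj by (simp add: mult.assoc[symmetric] mult.commute[of "cnj omega"])
qed

definition C_density :: "(complex \<Rightarrow> complex) \<Rightarrow> (complex \<Rightarrow> complex \<times> complex) \<Rightarrow> complex \<Rightarrow> complex" where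
  "C_density V u z = V z * snd (u z) * cnj (fst (u z)) + V (-z) * fst (u z) * cnj (snd (u z))"

definition mass_density :: "(complex \<Rightarrow> complex \<times> complex) \<Rightarrow> complex \<Rightarrow> complex" where
  "mass_density u z = fst (u z) * cnj (fst (u z)) + snd (u z) * cnj (snd (u z))"

lemma bracket_Cop_eq_integral: "bracket u (Cop V u) = integral cell (C_density V u)"
  by (simp add: bracket_def Cop_def C_density_def [abs_def])

lemma bracket_self_eq_integral: "bracket u u = integral cell (mass_density u)"
  by (simp add: bracket_def mass_density_def [abs_def])

lemma C_density_periodic:
  assumes "\<forall>z. \<forall>\<gamma>\<in>lattice. V (z + \<gamma>) = exp (\<i> * of_real (rinner \<gamma> Kpt)) * V z"
    and "L0_invariant u"
  shows "C_density V u (z + cell_diagonal) = C_density V u z"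
proof -
  have "C_density V u (z + cell_diagonal) = omega ^ 3 * (V z * snd (u z) * cnj (fst (u z)))
      + cnj omega ^ 3 * (V (-z) * fst (u z) * cnj (snd (u z)))"
    unfolding C_density_def L0_invariant_shift_cell_diagonal[OF assms(2)]
      quasiperiodic_shift_cell_diagonal[OF assms(1)]
    by (simp add: power3_eq_cube algebra_simps)
  moreover have "cnj omega ^ 3 = 1"
    using omega_cube by (metis complex_cnj_one complex_cnj_power)
  ultimately show ?thesis using omega_cube by (simp add: C_density_def)
qed

lemma mass_density_periodic:
  assumes "L0_invariant u"
  shows "mass_density u (z + cell_diagonal) = mass_density u z"
proof -
  have "mass_density u (z + cell_diagonal) = (omega * cnj omega) * mass_density u z"
    unfolding mass_density_def L0_invariant_shift_cell_diagonal[OF assms] by (simp add: algebra_simps)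
  then show ?thesis using omega_mult_cnj by simp
qed

lemma C_density_conj_reflect: "C_density V (conj_reflect u) = (\<lambda>z. C_density V u (-z))"
  by (simp add: fun_eq_iff C_density_def conj_reflect_def algebra_simps)

lemma mass_density_conj_reflect: "mass_density (conj_reflect u) = (\<lambda>z. mass_density u (-z))"
  by (simp add: fun_eq_iff mass_density_def conj_reflect_def algebra_simps)

lemma bracket_Cop_conj_reflect:
  assumes "\<forall>z. \<forall>\<gamma>\<in>lattice. V (z + \<gamma>) = exp (\<i> * of_real (rinner \<gamma> Kpt)) * V z"
    and "L0_invariant u"
  shows "bracket (conj_reflect u) (Cop V (conj_reflect u)) = bracket u (Cop V u)"
  unfolding bracket_Cop_eq_integral C_density_conj_reflect
  using integral_cell_uminus C_density_periodic[OF assms] .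

lemma bracket_conj_reflect:
  assumes "L0_invariant u"
  shows "bracket (conj_reflect u) (conj_reflect u) = bracket u u"
  unfolding bracket_self_eq_integral mass_density_conj_reflect
  using integral_cell_uminus mass_density_periodic[OF assms] .

lemma bracket_Cop_cscale: "bracket (cscale a u) (Cop V (cscale a u)) = a * cnj a * bracket u (Cop V u)"
proof -
  have "C_density V (cscale a u) = (\<lambda>z. a * cnj a * C_density V u z)"
    by (simp add: fun_eq_iff C_density_def cscale_def algebra_simps)
  then show ?thesis by (simp add: bracket_Cop_eq_integral)
qed

lemma bracket_cscale: "bracket (cscale a u) (cscale a u) = a * cnj a * bracket u u"
proof -
  have "mass_density (cscale a u) = (\<lambda>z. a * cnj a * mass_density u z)"
    by (simp add: fun_eq_iff mass_density_def cscale_def algebra_simps)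
  then show ?thesis by (simp add: bracket_self_eq_integral)
qed

lemma bracket_Cop_unit_cscale:
  assumes "unit_vec (cscale a w)"
  shows "bracket (cscale a w) (Cop V (cscale a w)) = bracket w (Cop V w) / bracket w w"
proof -
  from assms have norm: "a * cnj a * bracket w w = 1"
    by (simp add: unit_vec_def bracket_cscale)
  then have "bracket w w \<noteq> 0" by auto
  with norm have "a * cnj a = 1 / bracket w w" by (simp add: field_simps)
  then show ?thesis by (simp add: bracket_Cop_cscale)
qed

theorem lemma3p2:
  fixes U V :: "complex \<Rightarrow> complex" and \<alpha> :: complex
  assumes U_smooth: "smooth U" and V_smooth: "smooth V"
    and U_per: "\<forall>z. \<forall>\<gamma>\<in>lattice. U (z + \<gamma>) = exp (\<i> * of_real (rinner \<gamma> Kpt)) * U z"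
    and U_rot: "\<forall>z. U (omega * z) = omega * U z"
    and U_sym: "\<forall>z. cnj (U (cnj z)) = - U (- z)"
    and V_sym: "\<forall>z. V z = V (cnj z) \<and> V (cnj z) = cnj (V (- z))"
    and V_rot: "\<forall>z. V (omega * z) = V z"
    and V_per: "\<forall>z. \<forall>\<gamma>\<in>lattice. V (z + \<gamma>) = exp (\<i> * of_real (rinner \<gamma> Kpt)) * V z"
    and real: "\<alpha> \<in> \<real>"
    and magic: "magic U \<alpha>"
    and simple: "simple_magic U \<alpha>"
  shows "\<forall>k u us. u \<in> kerD U \<alpha> k \<and> unit_vec u \<and> us \<in> kerDadj U \<alpha> k \<and> unit_vec us \<longrightarrow>
           bracket u (Cop V u) = bracket us (Cop V us)"
proof (intro allI impI, elim conjE)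
  fix k u us
  assume u: "u \<in> kerD U \<alpha> k" "unit_vec u" and us: "us \<in> kerDadj U \<alpha> k" "unit_vec us"
  obtain w where w: "w \<in> kerD U \<alpha> k" and span: "\<And>v. v \<in> kerD U \<alpha> k \<Longrightarrow> \<exists>c. v = cscale c w"
    using simple unfolding simple_magic_def one_dim_def cscale_def by blast
  then have L: "L0_invariant w" by (simp add: kerD_def L2_0_def)
  obtain a where "u = cscale a w" using span[OF u(1)] by blast
  then have "bracket u (Cop V u) = bracket w (Cop V w) / bracket w w"
    using bracket_Cop_unit_cscale u(2) by simp
  moreover obtain b where "conj_reflect us = cscale b w"
    using span[OF kerDadj_conj_reflect[OF real us(1)]] by blast
  then have "us = cscale (cnj b) (conj_reflect w)"
    by (metis conj_reflect_conj_reflect conj_reflect_cscale)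
  then have "bracket us (Cop V us) =
      bracket (conj_reflect w) (Cop V (conj_reflect w)) / bracket (conj_reflect w) (conj_reflect w)"
    using bracket_Cop_unit_cscale us(2) by simp
  ultimately show "bracket u (Cop V u) = bracket us (Cop V us)"
    using bracket_Cop_conj_reflect[OF V_per L] bracket_conj_reflect[OF L] by simp
qed

end
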